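(* Let $(\mathcal{G}(u_0,v_0),-\Omega^2\,du\,dv)$ with radial function $r$ and stress-energy components $T_{uu},T_{uv},T_{vv}$ be as described in the context, satisfying assumptions (I)–(VII), and suppose there is $\delta>0$ such that, with $\mathcal{W}=\mathcal{W}(\delta)$, condition (A), $T_{uv}\Omega^{-2}<\frac1{4r^2}$, holds on $\mathcal{A}\cap\mathcal{W}$. If $\mathcal{A}\cap\mathcal{W}=\emptyset$, then $\mathcal{W}\cap\mathcal{R}$ contains a rectangle $K(u_1,v_1)=[0,u_1]\times[v_1,\infty)$ for some $u_1\in(0,u_0]$, $v_1\in[v_0,\infty)$.
   Context: Fix double null coordinates $(u,v)$ on $\mathbb{R}^2$ with Minkowski metric $-du\,dv$, time-oriented so that $u,v$ increase toward the future. For $u,v>0$, $K(u,v)=[0,u]\times[v,\infty)$. Fix $u_0,v_0>0$, $\mathcal{C}_{in}=[0,u_0]\times\{v_0\}$, $\mathcal{C}_{out}=\{0\}\times[v_0,\infty)$; causal notions refer to $K(u_0,v_0)$. Let $\mathcal{G}(u_0,v_0)\subset K(u_0,v_0)$ be globally hyperbolic, relatively open, containing $\mathcal{C}_{in}\cup\mathcal{C}_{out}$, with metric $-\Omega^2du\,dv$ ($\Omega>0$ smooth), smooth $r\ge0$ with $r>0$ on $\mathcal{C}_{in}\cup\mathcal{C}_{out}$, and smooth $T_{uu},T_{uv},T_{vv}$ (stress-energy components of the spherically symmetric spacetime $-\Omega^2du\,dv+r^2g_{S^2}$) satisfying $\partial_u(\Omega^{-2}\partial_u r)=-r\Omega^{-2}T_{uu}$,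 $\partial_v(\Omega^{-2}\partial_v r)=-r\Omega^{-2}T_{vv}$, $\partial_u m=2r^2\Omega^{-2}(T_{uv}\partial_u r-T_{uu}\partial_v r)$, $\partial_v m=2r^2\Omega^{-2}(T_{uv}\partial_v r-T_{vv}\partial_u r)$, with $m=\frac r2(1+4\Omega^{-2}\partial_u r\partial_v r)$. Define $\mathcal{R}=\{\partial_v r>0,\partial_u r<0\}$, $\mathcal{T}=\{\partial_v r<0,\partial_u r<0\}$, $\mathcal{A}=\{\partial_v r=0,\partial_u r<0\}$, $r_+=\sup_{\mathcal{C}_{out}}r$, $m_+=\sup_{\mathcal{C}_{out}}m$, $\mathcal{W}(\delta)=\{(u,v)\in\mathcal{G}(u_0,v_0):r\ge r_+-\delta\}$. Assumptions: (I) $T_{uu},T_{uv},T_{vv}\ge0$; (II) $J^-(\mathcal{G}(u_0,v_0))\subset\mathcal{G}(u_0,v_0)$; (III) $r\le r_+<\infty$ on $\mathcal{C}_{out}$; (IV) $0\le m\le m_+<\infty$ on $\mathcal{C}_{out}$; (V) $\partial_u r<0$ on $\mathcal{C}_{out}$; (VI) $\partial_v r>0$ on $\mathcal{C}_{out}$; (VII) (closures in $K(u_0,v_0)$) if $p\in\overline{\mathcal{R}}$, $q\in\overline{\mathcal{R}}\cap I^-(p)$, $J^-(p)\cap J^+(q)\setminus\{p\}\subset\mathcal{R}\cup\mathcal{A}$, then $p\in\mathcal{R}\cup\mathcal{A}$. *)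

theory Defs
  imports "HOL-Analysis.Analysis"
begin

text \<open>Points of R^2 in double null coordinates are pairs (u,v).\<close>

definition pu :: "(real \<times> real \<Rightarrow> real) \<Rightarrow> real \<times> real \<Rightarrow> real" where
  "pu f p = deriv (\<lambda>s. f (s, snd p)) (fst p)"

definition pv :: "(real \<times> real \<Rightarrow> real) \<Rightarrow> real \<times> real \<Rightarrow> real" where
  "pv f p = deriv (\<lambda>s. f (fst p, s)) (snd p)"

fun Ck_on :: "nat \<Rightarrow> (real \<times> real) set \<Rightarrow> (real \<times> real \<Rightarrow> real) \<Rightarrow> bool" where
  "Ck_on 0 U f = continuous_on U f"
| "Ck_on (Suc k) U f = ((\<forall>x\<in>U. f differentiable (at x)) \<and> Ck_on k U (pu f) \<and> Ck_on k U (pv f))"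

definition smooth_on :: "(real \<times> real) set \<Rightarrow> (real \<times> real \<Rightarrow> real) \<Rightarrow> bool" where
  "smooth_on S f = (\<exists>U. open U \<and> S \<subseteq> U \<and> (\<forall>k. Ck_on k U f))"

definition Krect :: "real \<Rightarrow> real \<Rightarrow> (real \<times> real) set" where
  "Krect u v = {p. 0 \<le> fst p \<and> fst p \<le> u \<and> v \<le> snd p}"

text \<open>Causal relations of Minkowski space -du dv, time-oriented by increasing u, v,
  restricted to the ambient region K.\<close>
definition causal_le :: "real \<times> real \<Rightarrow> real \<times> real \<Rightarrow> bool" where
  "causal_le q p = (fst q \<le> fst p \<and> snd q \<le> snd p)"

definition chron_lt :: "real \<times> real \<Rightarrow> real \<times> real \<Rightarrow> bool" where
  "chron_lt q p = (fst q < fst p \<and> snd q < snd p)"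

definition Jminus :: "(real \<times> real) set \<Rightarrow> (real \<times> real) set \<Rightarrow> (real \<times> real) set" where
  "Jminus K S = {q\<in>K. \<exists>p\<in>S. causal_le q p}"

definition Jplus :: "(real \<times> real) set \<Rightarrow> (real \<times> real) set \<Rightarrow> (real \<times> real) set" where
  "Jplus K S = {q\<in>K. \<exists>p\<in>S. causal_le p q}"

definition Iminus :: "(real \<times> real) set \<Rightarrow> (real \<times> real) set \<Rightarrow> (real \<times> real) set" where
  "Iminus K S = {q\<in>K. \<exists>p\<in>S. chron_lt q p}"

definition causal_curve_in :: "(real \<times> real) set \<Rightarrow> (real \<Rightarrow> real \<times> real) \<Rightarrow> bool" where
  "causal_curve_in G \<gamma> = (continuous_on {0..1} \<gamma> \<and> \<gamma> ` {0..1} \<subseteq> G \<and>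
     (\<forall>s t. 0 \<le> s \<longrightarrow> s \<le> t \<longrightarrow> t \<le> 1 \<longrightarrow> causal_le (\<gamma> s) (\<gamma> t)))"

definition causally_precedes_in :: "(real \<times> real) set \<Rightarrow> real \<times> real \<Rightarrow> real \<times> real \<Rightarrow> bool" where
  "causally_precedes_in G p q = (\<exists>\<gamma>. causal_curve_in G \<gamma> \<and> \<gamma> 0 = p \<and> \<gamma> 1 = q)"

text \<open>Global hyperbolicity of G (with a metric conformal to -du dv; causality is automatic
  in 1+1 double null coordinates): all causal diamonds of G are compact.\<close>
definition globally_hyperbolic :: "(real \<times> real) set \<Rightarrow> bool" where
  "globally_hyperbolic G = (\<forall>p\<in>G. \<forall>q\<in>G.
      compact {x. causally_precedes_in G p x \<and> causally_precedes_in G x q})"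

definition rel_open_in :: "(real \<times> real) set \<Rightarrow> (real \<times> real) set \<Rightarrow> bool" where
  "rel_open_in K G = openin (top_of_set K) G"

definition hawking_mass :: "(real \<times> real \<Rightarrow> real) \<Rightarrow> (real \<times> real \<Rightarrow> real) \<Rightarrow> real \<times> real \<Rightarrow> real" where
  "hawking_mass \<Omega> r p = r p / 2 * (1 + 4 * (\<Omega> p) powi (-2) * pu r p * pv r p)"


definition Cin :: "real \<Rightarrow> real \<Rightarrow> (real \<times> real) set" where
  "Cin u0 v0 = {p. 0 \<le> fst p \<and> fst p \<le> u0 \<and> snd p = v0}"

definition Cout :: "real \<Rightarrow> (real \<times> real) set" where
  "Cout v0 = {p. fst p = 0 \<and> v0 \<le> snd p}"

definition Rreg :: "(real \<times> real) set \<Rightarrow> (real \<times> real \<Rightarrow> real) \<Rightarrow> (real \<times> real) set" where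
  "Rreg G r = {p\<in>G. pv r p > 0 \<and> pu r p < 0}"

definition Treg :: "(real \<times> real) set \<Rightarrow> (real \<times> real \<Rightarrow> real) \<Rightarrow> (real \<times> real) set" where
  "Treg G r = {p\<in>G. pv r p < 0 \<and> pu r p < 0}"

definition Areg :: "(real \<times> real) set \<Rightarrow> (real \<times> real \<Rightarrow> real) \<Rightarrow> (real \<times> real) set" where
  "Areg G r = {p\<in>G. pv r p = 0 \<and> pu r p < 0}"

definition r_plus :: "real \<Rightarrow> (real \<times> real \<Rightarrow> real) \<Rightarrow> real" where
  "r_plus v0 r = Sup (r ` Cout v0)"

definition m_plus :: "real \<Rightarrow> (real \<times> real \<Rightarrow> real) \<Rightarrow> (real \<times> real \<Rightarrow> real) \<Rightarrow> real" where
  "m_plus v0 \<Omega> r = Sup (hawking_mass \<Omega> r ` Cout v0)"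

definition Wreg :: "(real \<times> real) set \<Rightarrow> real \<Rightarrow> (real \<times> real \<Rightarrow> real) \<Rightarrow> real \<Rightarrow> (real \<times> real) set" where
  "Wreg G v0 r \<delta> = {p\<in>G. r p \<ge> r_plus v0 r - \<delta>}"

end

theory Submission
  imports Defs
begin

(* The Raychaudhuri equation in u and T_uu >= 0 make Omega^-2 d_u r nonincreasing in u, so
   d_u r < 0 propagates from C_out to the whole past-closed domain. Pick v1 with r(0,v1) close
   to r_+ and a short segment [0,u1] x {v1} on which r stays above r_+ - delta. Without
   apparent horizon in W, d_v r cannot vanish where r > r_+ - delta; starting positive on
   C_out, it therefore stays positive along that segment and then up every ray of constant u,
   which keeps r increasing and hence above r_+ - delta. So the part of the domain inside
   K(u1,v1) is regular, and a causally minimal point of K(u1,v1) outside the domain would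
   contradict (VII). *)

lemma smooth_on_pu: "smooth_on S f \<Longrightarrow> smooth_on S (pu f)"
  unfolding smooth_on_def by (meson Ck_on.simps(2))

lemma smooth_on_pv: "smooth_on S f \<Longrightarrow> smooth_on S (pv f)"
  unfolding smooth_on_def by (meson Ck_on.simps(2))

lemma smooth_on_differentiable: "smooth_on S f \<Longrightarrow> x \<in> S \<Longrightarrow> f differentiable (at x)"
  unfolding smooth_on_def by (meson Ck_on.simps(2) subsetD)

lemma smooth_on_continuous_on: "smooth_on S f \<Longrightarrow> continuous_on S f"
  unfolding smooth_on_def by (meson Ck_on.simps(1) continuous_on_subset)

lemma pu_has_real_derivative:
  assumes "f differentiable (at (t, b))"
  shows "((\<lambda>s. f (s, b)) has_real_derivative pu f (t, b)) (at t)"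
proof -
  have "(\<lambda>s::real. (s, b)) differentiable (at t)" by (auto intro!: derivative_intros)
  then have "(\<lambda>s. f (s, b)) differentiable (at t)"
    using differentiable_chain_at[of "\<lambda>s. (s, b)" t f] assms by (simp add: o_def)
  then show ?thesis unfolding pu_def by (simp add: DERIV_deriv_iff_real_differentiable)
qed

lemma pv_has_real_derivative:
  assumes "f differentiable (at (a, t))"
  shows "((\<lambda>s. f (a, s)) has_real_derivative pv f (a, t)) (at t)"
proof -
  have "(\<lambda>s::real. (a, s)) differentiable (at t)" by (auto intro!: derivative_intros)
  then have "(\<lambda>s. f (a, s)) differentiable (at t)"
    using differentiable_chain_at[of "\<lambda>s. (a, s)" t f] assms by (simp add: o_def)
  then show ?thesis unfolding pv_def by (simp add: DERIV_deriv_iff_real_differentiable)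
qed

lemma pu_nonpos_imp_nonincreasing:
  assumes "c \<le> a"
    and "\<And>s. c \<le> s \<Longrightarrow> s \<le> a \<Longrightarrow> g differentiable (at (s, b)) \<and> pu g (s, b) \<le> 0"
  shows "g (a, b) \<le> g (c, b)"
  using DERIV_nonpos_imp_nonincreasing[of c a "\<lambda>s. g (s, b)"] assms pu_has_real_derivative
  by blast

lemma positive_derivative_persists:
  fixes f k :: "real \<Rightarrow> real"
  assumes "c \<le> d" and k_cont: "continuous_on {c..d} k"
    and f_deriv: "\<And>t. t \<in> {c..d} \<Longrightarrow> (f has_real_derivative k t) (at t)"
    and "k c > 0" and "f c > L"
    and k_nonzero: "\<And>t. t \<in> {c..d} \<Longrightarrow> f t > L \<Longrightarrow> k t \<noteq> 0"
  shows "k d > 0 \<and> f d > L"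
proof -
  have f_above: "f t > L" if "c \<le> t" "t \<le> d" "\<forall>z. c < z \<and> z < t \<longrightarrow> k z > 0" for t
  proof (cases "c = t")
    case False
    then have "c < t" using that by simp
    moreover have "(f has_real_derivative k x) (at x)" if "c \<le> x" "x \<le> t" for x
      using f_deriv that \<open>t \<le> d\<close> by simp
    ultimately obtain z where "c < z" "z < t" "f t - f c = (t - c) * k z"
      using MVT2[of c t f k] by blast
    moreover have "(t - c) * k z > 0" using calculation that by simp
    ultimately show ?thesis using \<open>f c > L\<close> by linarith
  qed (use \<open>f c > L\<close> in simp)
  have k_pos: "\<forall>t\<in>{c..d}. k t > 0"
  proof (rule ccontr)
    define Z where "Z = {c..d} \<inter> k -` {..0}"
    assume "\<not> (\<forall>t\<in>{c..d}. k t > 0)"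
    then have "Z \<noteq> {}" unfolding Z_def by force
    moreover have "compact Z"
      unfolding Z_def compact_eq_bounded_closed
      by (auto intro: continuous_closed_preimage[OF k_cont] bounded_Int)
    ultimately obtain ts where ts: "ts \<in> Z" "\<forall>t\<in>Z. ts \<le> t" using compact_attains_inf by blast
    have "c \<le> ts" "ts \<le> d" "k ts \<le> 0" using ts unfolding Z_def by auto
    moreover have "continuous_on {c..ts} k" using k_cont \<open>ts \<le> d\<close> by (auto intro: continuous_on_subset)
    ultimately obtain t where t: "c \<le> t" "t \<le> ts" "k t = 0"
      using IVT2'[of k ts 0 c] \<open>k c > 0\<close> by auto
    have "k z > 0" if "c < z" "z < t" for z
      using ts(2)[rule_format, of z] that t \<open>ts \<le> d\<close> unfolding Z_def by force
    then have "f t > L" using f_above t \<open>ts \<le> d\<close> by auto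
    then show False using k_nonzero t \<open>ts \<le> d\<close> by auto
  qed
  then show ?thesis using f_above[of d] \<open>c \<le> d\<close> by auto
qed

lemma causal_minimal_point:
  assumes "closed A" "A \<subseteq> Krect u v" "a \<in> A"
  obtains p where "p \<in> A" "\<And>x. x \<in> A \<Longrightarrow> causal_le x p \<Longrightarrow> x = p"
proof -
  define c where "c = fst a + snd a"
  define A' where "A' = A \<inter> {x. fst x + snd x \<le> c}"
  have "A' \<subseteq> {0..u} \<times> {v..c}"
    using assms(2) unfolding A'_def Krect_def by (auto simp: mem_Times_iff)
  then have "bounded A'"
    by (rule bounded_subset[OF compact_imp_bounded[OF compact_Times[OF compact_Icc compact_Icc]]])
  moreover have "closed A'"
    unfolding A'_def by (intro closed_Int assms(1) closed_Collect_le continuous_intros)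
  ultimately have "compact A'" by (simp add: compact_eq_bounded_closed)
  moreover have "a \<in> A'" using assms(3) unfolding A'_def c_def by simp
  moreover have "continuous_on A' (\<lambda>x. fst x + snd x)" by (intro continuous_intros)
  ultimately obtain p where p: "p \<in> A'" "\<forall>y\<in>A'. fst p + snd p \<le> fst y + snd y"
    using continuous_attains_inf by blast
  show ?thesis
  proof
    show "p \<in> A" using p(1) unfolding A'_def by simp
    fix x assume "x \<in> A" "causal_le x p"
    moreover have "x \<in> A'" using calculation p(1) unfolding A'_def causal_le_def by auto
    ultimately have "fst p + snd p \<le> fst x + snd x" "fst x \<le> fst p" "snd x \<le> snd p"
      using p(2) unfolding causal_le_def by auto
    then show "x = p" by (intro prod_eqI) linarith+
  qed
qed

lemma past_closed_mem:
  "Jminus K G \<subseteq> G \<Longrightarrow> y \<in> G \<Longrightarrow> x \<in> K \<Longrightarrow> causal_le x y \<Longrightarrow> x \<in> G"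
  unfolding Jminus_def by blast

lemma pu_neg_by_raychaudhuri:
  assumes GK: "G \<subseteq> Krect u0 v0" and past: "Jminus (Krect u0 v0) G \<subseteq> G"
    and smooth: "smooth_on G \<Omega>" "smooth_on G r"
    and \<Omega>pos: "\<forall>p\<in>G. \<Omega> p > 0" and rnn: "\<forall>p\<in>G. r p \<ge> 0" and Tuu: "\<forall>p\<in>G. Tuu p \<ge> 0"
    and Ray_u: "\<forall>p\<in>G. pu (\<lambda>q. (\<Omega> q) powi (-2) * pu r q) p = - r p * (\<Omega> p) powi (-2) * Tuu p"
    and V: "\<forall>p\<in>Cout v0. pu r p < 0"
    and "p \<in> G"
  shows "pu r p < 0"
proof -
  obtain a b where p: "p = (a, b)" by (cases p)
  have "(a, b) \<in> G" using \<open>p \<in> G\<close> p by simp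
  define F where "F q = (\<Omega> q) powi (-2) * pu r q" for q
  have ab: "0 \<le> a" "a \<le> u0" "v0 \<le> b" using GK \<open>(a, b) \<in> G\<close> unfolding Krect_def by auto
  have seg: "(s, b) \<in> G" if "0 \<le> s" "s \<le> a" for s
    using past_closed_mem[OF past \<open>(a, b) \<in> G\<close>] that ab unfolding Krect_def causal_le_def by auto
  have "F (a, b) \<le> F (0, b)"
  proof (rule pu_nonpos_imp_nonincreasing[OF \<open>0 \<le> a\<close>])
    fix s assume "0 \<le> s" "s \<le> a"
    then have sG: "(s, b) \<in> G" using seg by blast
    have "pu F (s, b) = - r (s, b) * \<Omega> (s, b) powi (-2) * Tuu (s, b)"
      using Ray_u sG unfolding F_def by simp
    then have "pu F (s, b) \<le> 0"
      using sG Tuu \<Omega>pos rnn by (simp add: less_imp_le)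
    moreover have "F differentiable (at (s, b))"
      unfolding F_def using sG \<Omega>pos
      by (intro differentiable_mult differentiable_power_int
          smooth_on_differentiable[OF smooth(1)] smooth_on_differentiable[OF smooth_on_pu[OF smooth(2)]])
        auto
    ultimately show "F differentiable (at (s, b)) \<and> pu F (s, b) \<le> 0" by blast
  qed
  also have "F (0, b) < 0"
    using V \<Omega>pos seg[of 0] ab unfolding F_def Cout_def by (auto intro!: mult_pos_neg)
  finally have "\<Omega> (a, b) powi (-2) * pu r (a, b) < 0" unfolding F_def .
  moreover have "\<Omega> (a, b) powi (-2) > 0" using \<Omega>pos \<open>(a, b) \<in> G\<close> by simp
  ultimately show ?thesis by (simp add: p mult_less_0_iff)
qed

lemma Cout_r_close_to_r_plus:
  assumes "\<delta> > 0"
  obtains b where "v0 \<le> b" "r (0, b) > r_plus v0 r - \<delta>"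
proof -
  have "r ` Cout v0 \<noteq> {}" unfolding Cout_def by force
  moreover have "r_plus v0 r - \<delta> < Sup (r ` Cout v0)" using assms unfolding r_plus_def by linarith
  ultimately have "\<exists>z\<in>r ` Cout v0. r_plus v0 r - \<delta> < z" by (rule less_cSupD)
  then obtain p where "p \<in> Cout v0" "r p > r_plus v0 r - \<delta>" by blast
  then show ?thesis using that unfolding Cout_def by (cases p) auto
qed

lemma initial_segment_above:
  fixes r :: "real \<times> real \<Rightarrow> real"
  assumes Gopen: "rel_open_in (Krect u0 v0) G" and "u0 > 0" and r_cont: "continuous_on G r"
    and "(0, v1) \<in> G" and "r (0, v1) > L"
  obtains u1 where "0 < u1" "u1 \<le> u0"
    "\<And>s. 0 \<le> s \<Longrightarrow> s \<le> u1 \<Longrightarrow> (s, v1) \<in> G \<and> r (s, v1) > L"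
proof -
  define Q where "Q = G \<inter> r -` {L<..}"
  have "openin (top_of_set G) Q"
    unfolding Q_def by (intro continuous_openin_preimage_gen r_cont open_greaterThan)
  then have "openin (top_of_set (Krect u0 v0)) Q"
    using Gopen unfolding rel_open_in_def by (rule openin_trans)
  moreover have "(0, v1) \<in> Q" using assms unfolding Q_def by simp
  ultimately obtain e where "e > 0" and e: "ball (0, v1) e \<inter> Krect u0 v0 \<subseteq> Q"
    unfolding openin_contains_ball by blast
  have "v0 \<le> v1"
    using openin_subset[OF Gopen[unfolded rel_open_in_def]] \<open>(0, v1) \<in> G\<close>
    unfolding Krect_def by auto
  show ?thesis
  proof
    show "0 < min u0 (e / 2)" "min u0 (e / 2) \<le> u0" using \<open>u0 > 0\<close> \<open>e > 0\<close> by auto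
    fix s assume "0 \<le> s" "s \<le> min u0 (e / 2)"
    then have "(s, v1) \<in> ball (0, v1) e \<inter> Krect u0 v0"
      using \<open>e > 0\<close> \<open>v0 \<le> v1\<close> by (simp add: dist_Pair_Pair Krect_def)
    then show "(s, v1) \<in> G \<and> r (s, v1) > L" using e unfolding Q_def by auto
  qed
qed

lemma pv_pos_above_segment:
  assumes GK: "G \<subseteq> Krect u0 v0" and past: "Jminus (Krect u0 v0) G \<subseteq> G"
    and smooth: "smooth_on G r"
    and seg: "\<And>s. 0 \<le> s \<Longrightarrow> s \<le> u1 \<Longrightarrow> (s, v1) \<in> G \<and> r (s, v1) > L"
    and "pv r (0, v1) > 0"
    and pv_nonzero: "\<And>p. p \<in> G \<Longrightarrow> r p > L \<Longrightarrow> pv r p \<noteq> 0"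
    and "(a, b) \<in> G" "a \<le> u1" "v1 \<le> b"
  shows "pv r (a, b) > 0 \<and> r (a, b) > L"
proof -
  have "0 \<le> a" "a \<le> u0" using GK \<open>(a, b) \<in> G\<close> unfolding Krect_def by auto
  moreover have "v0 \<le> v1" using GK seg[of 0] \<open>0 \<le> a\<close> \<open>a \<le> u1\<close> unfolding Krect_def by auto
  ultimately have vert: "(a, t) \<in> G" if "v1 \<le> t" "t \<le> b" for t
    using past_closed_mem[OF past \<open>(a, b) \<in> G\<close>] that unfolding Krect_def causal_le_def by auto
  have pv_cont: "continuous_on G (pv r)" by (rule smooth_on_continuous_on[OF smooth_on_pv[OF smooth]])
  have "pv r (a, v1) > 0"
  proof (rule ccontr)
    assume "\<not> pv r (a, v1) > 0"
    moreover have "continuous_on {0..a} (\<lambda>s. pv r (s, v1))"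
      using seg \<open>a \<le> u1\<close> by (intro continuous_on_compose2[OF pv_cont]) (auto intro!: continuous_intros)
    ultimately obtain s where "0 \<le> s" "s \<le> a" "pv r (s, v1) = 0"
      using IVT2'[of "\<lambda>s. pv r (s, v1)" a 0 0] \<open>pv r (0, v1) > 0\<close> \<open>0 \<le> a\<close> by auto
    then show False using pv_nonzero seg[of s] \<open>a \<le> u1\<close> by auto
  qed
  have "pv r (a, b) > 0 \<and> (\<lambda>t. r (a, t)) b > L"
  proof (rule positive_derivative_persists[OF \<open>v1 \<le> b\<close>])
    show "continuous_on {v1..b} (\<lambda>t. pv r (a, t))"
      using vert by (intro continuous_on_compose2[OF pv_cont]) (auto intro!: continuous_intros)
    show "((\<lambda>t. r (a, t)) has_real_derivative pv r (a, t)) (at t)" if "t \<in> {v1..b}" for t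
      using vert that by (auto intro: pv_has_real_derivative smooth_on_differentiable[OF smooth])
    show "pv r (a, v1) > 0" by fact
    show "(\<lambda>t. r (a, t)) v1 > L" using seg \<open>0 \<le> a\<close> \<open>a \<le> u1\<close> by simp
    show "pv r (a, t) \<noteq> 0" if "t \<in> {v1..b}" "(\<lambda>t. r (a, t)) t > L" for t
      using pv_nonzero vert that by auto
  qed
  then show ?thesis by simp
qed

lemma closed_Krect: "closed (Krect u v)"
  unfolding Krect_def by (intro closed_Collect_conj closed_Collect_le continuous_intros)

lemma Krect_subset_domain:
  assumes Gopen: "rel_open_in (Krect u0 v0) G"
    and "u1 \<le> u0" "v0 \<le> v1"
    and edge_out: "\<And>b. v1 \<le> b \<Longrightarrow> (0, b) \<in> G"
    and edge_in: "\<And>s. 0 \<le> s \<Longrightarrow> s \<le> u1 \<Longrightarrow> (s, v1) \<in> G"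
    and regular: "G \<inter> Krect u1 v1 \<subseteq> Rreg G r"
    and VII: "\<forall>p q. p \<in> closure (Rreg G r) \<inter> Krect u0 v0 \<longrightarrow>
                 q \<in> closure (Rreg G r) \<inter> Krect u0 v0 \<inter> Iminus (Krect u0 v0) {p} \<longrightarrow>
                 (Jminus (Krect u0 v0) {p} \<inter> Jplus (Krect u0 v0) {q}) - {p} \<subseteq> Rreg G r \<union> Areg G r \<longrightarrow>
                 p \<in> Rreg G r \<union> Areg G r"
  shows "Krect u1 v1 \<subseteq> G"
proof (rule ccontr)
  define K where "K = Krect u0 v0"
  obtain U where "open U" "G = K \<inter> U"
    using Gopen unfolding rel_open_in_def openin_open K_def by blast
  have K1_sub: "Krect u1 v1 \<subseteq> K" using assms unfolding K_def Krect_def by auto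
  then have "Krect u1 v1 - G = Krect u1 v1 \<inter> - U" using \<open>G = K \<inter> U\<close> by blast
  then have "closed (Krect u1 v1 - G)" using closed_Krect \<open>open U\<close> by (simp add: closed_Int closed_Compl)
  moreover assume "\<not> Krect u1 v1 \<subseteq> G"
  ultimately obtain p where p: "p \<in> Krect u1 v1" "p \<notin> G"
    and p_min: "\<And>x. x \<in> Krect u1 v1 - G \<Longrightarrow> causal_le x p \<Longrightarrow> x = p"
    using causal_minimal_point[of "Krect u1 v1 - G" u1 v1] by blast
  have below_regular: "x \<in> Rreg G r" if "x \<in> Krect u1 v1" "causal_le x p" "x \<noteq> p" for x
    using p_min[of x] that regular by blast
  obtain pa pb where p_eq: "p = (pa, pb)" by (cases p)
  have "0 \<le> pa" "pa \<le> u1" "v1 \<le> pb" using p p_eq unfolding Krect_def by auto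
  moreover have "pa \<noteq> 0" using edge_out \<open>v1 \<le> pb\<close> p p_eq by auto
  moreover have "pb \<noteq> v1" using edge_in \<open>0 \<le> pa\<close> \<open>pa \<le> u1\<close> p p_eq by auto
  ultimately have "0 < pa" "v1 < pb" by auto
  define q where "q = (pa / 2, v1)"
  have "q \<in> Krect u1 v1" "causal_le q p" "q \<noteq> p"
    unfolding q_def p_eq Krect_def causal_le_def using \<open>0 < pa\<close> \<open>pa \<le> u1\<close> \<open>v1 < pb\<close> by auto
  have "p \<in> closure (Rreg G r)"
    unfolding closure_approachable
  proof (intro allI impI)
    fix d :: real assume "d > 0"
    define y where "y = (pa, max v1 (pb - d / 2))"
    have "y \<in> Rreg G r"
      using below_regular[of y] \<open>0 < pa\<close> \<open>pa \<le> u1\<close> \<open>v1 < pb\<close> \<open>d > 0\<close>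
      unfolding y_def p_eq Krect_def causal_le_def by auto
    moreover have "dist y p < d"
      unfolding y_def p_eq using \<open>d > 0\<close> \<open>v1 < pb\<close> by (simp add: dist_Pair_Pair dist_real_def)
    ultimately show "\<exists>y\<in>Rreg G r. dist y p < d" by blast
  qed
  moreover have "q \<in> closure (Rreg G r)"
    using below_regular \<open>q \<in> Krect u1 v1\<close> \<open>causal_le q p\<close> \<open>q \<noteq> p\<close> closure_subset by blast
  moreover have "q \<in> Iminus K {p}"
    using \<open>q \<in> Krect u1 v1\<close> K1_sub \<open>0 < pa\<close> \<open>v1 < pb\<close>
    unfolding Iminus_def chron_lt_def q_def p_eq by auto
  moreover have "(Jminus K {p} \<inter> Jplus K {q}) - {p} \<subseteq> Rreg G r"
  proof
    fix x assume "x \<in> (Jminus K {p} \<inter> Jplus K {q}) - {p}"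
    then have "x \<in> Krect u1 v1" "causal_le x p" "x \<noteq> p"
      using \<open>pa \<le> u1\<close> unfolding Jminus_def Jplus_def causal_le_def q_def p_eq K_def Krect_def by auto
    then show "x \<in> Rreg G r" by (rule below_regular)
  qed
  ultimately have "p \<in> Rreg G r \<union> Areg G r"
    using VII[rule_format, of p q] K1_sub p \<open>q \<in> Krect u1 v1\<close> unfolding K_def by blast
  then show False using p unfolding Rreg_def Areg_def by auto
qed

theorem lemma2:
  fixes u0 v0 \<delta> :: real
    and G :: "(real \<times> real) set"
    and \<Omega> r Tuu Tuv Tvv :: "real \<times> real \<Rightarrow> real"
  assumes u0: "u0 > 0" and v0: "v0 > 0"
    and GK: "G \<subseteq> Krect u0 v0" and Gopen: "rel_open_in (Krect u0 v0) G"
    and Ghyp: "globally_hyperbolic G"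
    and GC: "Cin u0 v0 \<union> Cout v0 \<subseteq> G"
    and smooth: "smooth_on G \<Omega>" "smooth_on G r" "smooth_on G Tuu" "smooth_on G Tuv" "smooth_on G Tvv"
    and \<Omega>pos: "\<forall>p\<in>G. \<Omega> p > 0"
    and rnn: "\<forall>p\<in>G. r p \<ge> 0"
    and rpos: "\<forall>p\<in>Cin u0 v0 \<union> Cout v0. r p > 0"
    and Ray_u: "\<forall>p\<in>G. pu (\<lambda>q. (\<Omega> q) powi (-2) * pu r q) p = - r p * (\<Omega> p) powi (-2) * Tuu p"
    and Ray_v: "\<forall>p\<in>G. pv (\<lambda>q. (\<Omega> q) powi (-2) * pv r q) p = - r p * (\<Omega> p) powi (-2) * Tvv p"
    and mu: "\<forall>p\<in>G. pu (hawking_mass \<Omega> r) p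
               = 2 * (r p)\<^sup>2 * (\<Omega> p) powi (-2) * (Tuv p * pu r p - Tuu p * pv r p)"
    and mv: "\<forall>p\<in>G. pv (hawking_mass \<Omega> r) p
               = 2 * (r p)\<^sup>2 * (\<Omega> p) powi (-2) * (Tuv p * pv r p - Tvv p * pu r p)"
    and I: "\<forall>p\<in>G. Tuu p \<ge> 0 \<and> Tuv p \<ge> 0 \<and> Tvv p \<ge> 0"
    and II: "Jminus (Krect u0 v0) G \<subseteq> G"
    and III: "bdd_above (r ` Cout v0)" "\<forall>p\<in>Cout v0. r p \<le> r_plus v0 r"
    and IV: "bdd_above (hawking_mass \<Omega> r ` Cout v0)"
            "\<forall>p\<in>Cout v0. 0 \<le> hawking_mass \<Omega> r p \<and> hawking_mass \<Omega> r p \<le> m_plus v0 \<Omega> r"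
    and V: "\<forall>p\<in>Cout v0. pu r p < 0"
    and VI: "\<forall>p\<in>Cout v0. pv r p > 0"
    and VII: "\<forall>p q. p \<in> closure (Rreg G r) \<inter> Krect u0 v0 \<longrightarrow>
                 q \<in> closure (Rreg G r) \<inter> Krect u0 v0 \<inter> Iminus (Krect u0 v0) {p} \<longrightarrow>
                 (Jminus (Krect u0 v0) {p} \<inter> Jplus (Krect u0 v0) {q}) - {p} \<subseteq> Rreg G r \<union> Areg G r \<longrightarrow>
                 p \<in> Rreg G r \<union> Areg G r"
    and \<delta>: "\<delta> > 0"
    and condA: "\<forall>p\<in>Areg G r \<inter> Wreg G v0 r \<delta>. Tuv p * (\<Omega> p) powi (-2) < 1 / (4 * (r p)\<^sup>2)"
    and noA: "Areg G r \<inter> Wreg G v0 r \<delta> = {}"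
  shows "\<exists>u1 v1. 0 < u1 \<and> u1 \<le> u0 \<and> v0 \<le> v1 \<and>
           Krect u1 v1 \<subseteq> Wreg G v0 r \<delta> \<inter> Rreg G r"
proof -
  define L where "L = r_plus v0 r - \<delta>"
  have pu_neg: "\<And>p. p \<in> G \<Longrightarrow> pu r p < 0"
    using pu_neg_by_raychaudhuri[OF GK II smooth(1,2) \<Omega>pos rnn _ Ray_u V] I by blast
  have Cout_G: "\<And>b. v0 \<le> b \<Longrightarrow> (0, b) \<in> G" using GC unfolding Cout_def by auto
  obtain v1 where "v0 \<le> v1" "r (0, v1) > L"
    using Cout_r_close_to_r_plus[OF \<delta>] unfolding L_def by blast
  then obtain u1 where u1: "0 < u1" "u1 \<le> u0"
    and seg: "\<And>s. 0 \<le> s \<Longrightarrow> s \<le> u1 \<Longrightarrow> (s, v1) \<in> G \<and> r (s, v1) > L"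
    using initial_segment_above[OF Gopen u0 smooth_on_continuous_on[OF smooth(2)] Cout_G] by blast
  have "pv r (0, v1) > 0" using VI \<open>v0 \<le> v1\<close> unfolding Cout_def by simp
  moreover have pv_nonzero: "\<And>p. p \<in> G \<Longrightarrow> r p > L \<Longrightarrow> pv r p \<noteq> 0"
    using noA pu_neg unfolding Areg_def Wreg_def L_def by fastforce
  ultimately have above: "pv r p > 0 \<and> r p > L" if "p \<in> G \<inter> Krect u1 v1" for p
    using pv_pos_above_segment[OF GK II smooth(2) seg] that unfolding Krect_def by (cases p) auto
  then have "G \<inter> Krect u1 v1 \<subseteq> Rreg G r" using pu_neg unfolding Rreg_def by auto
  then have "Krect u1 v1 \<subseteq> G"
    using Krect_subset_domain[OF Gopen u1(2) \<open>v0 \<le> v1\<close> _ _ _ VII] Cout_G seg \<open>v0 \<le> v1\<close> by auto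
  then have "Krect u1 v1 \<subseteq> Wreg G v0 r \<delta> \<inter> Rreg G r"
    using above pu_neg unfolding Wreg_def Rreg_def L_def by fastforce
  then show ?thesis using u1 \<open>v0 \<le> v1\<close> by blast
qed

end
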